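(* Let $\theta\mapsto K_m(\theta)\in\mathbb{C}^{D\times D}$, $m=0,\dots,d-1$, be differentiable with $\sum_mK_m^\dagger K_m=\mathbb{1}_D$, fix $\theta_0$, and suppose the HKS condition $i\sum_mK_m^\dagger\partial_\theta K_m\in\mathrm{span}\{K_i^\dagger K_j\}$ holds at $\theta_0$. Let $h\in\mathbb{C}^{d\times d}$ be a Hermitian matrix such that the isometry $W_\theta=(\mathbb{1}_D\otimes e^{-i\theta h})V_\theta$ (where $V_\theta=\sum_mK_m(\theta)\otimes|m\rangle$) satisfies $\sum_mW_m(\theta_0)^\dagger\partial_\theta W_m(\theta_0)=0$. Let $\rho_{ss}$ be a fixed point of $\mathcal{E}(X)=\sum_mK_mXK_m^\dagger$ at $\theta_0$, let $|\psi_V\rangle=|\Phi^V_T\rangle$ and $|\psi_W\rangle=|\Phi^W_T\rangle$ be the $T$-site states (defined in the context), and let $H=\sum_{\tau=1}^Th_\tau$ where $h_\tau$ is $h$ acting on the $\tau$-th radiation qudit. Then $|\psi_V(\theta)\rangle=e^{i\theta H}|\psi_W(\theta)\rangle$ and the quantum Fisher information of $\psi_V$ at $\theta_0$ is $$F[\psi_V]=4\,\mathrm{Var}_{\psi_W}[H]+4T\alpha^W+8\,\mathrm{Im}\,\langle\psi_W|H|\dot\psi_W\rangle,$$ where $\alpha^W=\sum_m\mathrm{Tr}(\dot W_m\rho_{ss}\dot W_m^\dagger)$ and $\mathrm{Var}_{\psi_W}[H]=\langle\psi_W|H^2|\psi_W\rangle-\langle\psi_W|H|\psi_W\rangle^2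$.
   Context: Dots denote $\partial_\theta$ at $\theta_0$. For $X=\sum_mX_m\otimes|m\rangle$, $|\Phi^X_T(\theta)\rangle=\sum_{\mathbf{m}}(\mathbb{1}_A\otimes X_{m_T}(\theta)\cdots X_{m_1}(\theta))|\xi\rangle\otimes|m_1\cdots m_T\rangle$ with $|\xi\rangle\in\mathbb{C}^D_A\otimes\mathbb{C}^D_S$ a fixed $\theta$-independent purification of $\rho_{ss}$. Pure-state QFI is $4(\langle\dot\psi|\dot\psi\rangle-|\langle\dot\psi|\psi\rangle|^2)$. *)

theory Defs
  imports "HOL-Analysis.Analysis"
begin

text \<open>Matrices/operators on a finite index carrier are functions 'i => 'i => complex,
  vectors are functions 'i => complex; sums run over an explicit carrier set I.\<close>

definition mmult :: "'i set \<Rightarrow> ('i \<Rightarrow> 'i \<Rightarrow> complex) \<Rightarrow> ('i \<Rightarrow> 'i \<Rightarrow> complex) \<Rightarrow> 'i \<Rightarrow> 'i \<Rightarrow> complex" where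
  "mmult I A B = (\<lambda>x y. \<Sum>z\<in>I. A x z * B z y)"

definition mone :: "'i \<Rightarrow> 'i \<Rightarrow> complex" where
  "mone = (\<lambda>x y. if x = y then 1 else 0)"

primrec mpow :: "'i set \<Rightarrow> ('i \<Rightarrow> 'i \<Rightarrow> complex) \<Rightarrow> nat \<Rightarrow> 'i \<Rightarrow> 'i \<Rightarrow> complex" where
  "mpow I A 0 = mone"
| "mpow I A (Suc n) = mmult I (mpow I A n) A"

definition mexp :: "'i set \<Rightarrow> ('i \<Rightarrow> 'i \<Rightarrow> complex) \<Rightarrow> 'i \<Rightarrow> 'i \<Rightarrow> complex" where
  "mexp I A = (\<lambda>x y. \<Sum>n. mpow I A n x y / of_nat (fact n))"

definition mvec :: "'i set \<Rightarrow> ('i \<Rightarrow> 'i \<Rightarrow> complex) \<Rightarrow> ('i \<Rightarrow> complex) \<Rightarrow> 'i \<Rightarrow> complex" where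
  "mvec I A v = (\<lambda>x. \<Sum>y\<in>I. A x y * v y)"

definition adj :: "('i \<Rightarrow> 'i \<Rightarrow> complex) \<Rightarrow> 'i \<Rightarrow> 'i \<Rightarrow> complex" where
  "adj A = (\<lambda>x y. cnj (A y x))"

definition inner_c :: "'i set \<Rightarrow> ('i \<Rightarrow> complex) \<Rightarrow> ('i \<Rightarrow> complex) \<Rightarrow> complex" where
  "inner_c I u v = (\<Sum>x\<in>I. cnj (u x) * v x)"

definition mtrace :: "('i::finite \<Rightarrow> 'i \<Rightarrow> complex) \<Rightarrow> complex" where
  "mtrace A = (\<Sum>x\<in>UNIV. A x x)"

definition mderiv :: "(real \<Rightarrow> 'i \<Rightarrow> 'j \<Rightarrow> complex) \<Rightarrow> real \<Rightarrow> 'i \<Rightarrow> 'j \<Rightarrow> complex" where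
  "mderiv A t = (\<lambda>x y. vector_derivative (\<lambda>s. A s x y) (at t))"

definition vderiv :: "(real \<Rightarrow> 'i \<Rightarrow> complex) \<Rightarrow> real \<Rightarrow> 'i \<Rightarrow> complex" where
  "vderiv v t = (\<lambda>x. vector_derivative (\<lambda>s. v s x) (at t))"

definition QFI :: "'i set \<Rightarrow> (real \<Rightarrow> 'i \<Rightarrow> complex) \<Rightarrow> real \<Rightarrow> real" where
  "QFI I psi t0 = 4 * (Re (inner_c I (vderiv psi t0) (vderiv psi t0))
                      - (cmod (inner_c I (vderiv psi t0) (psi t0)))\<^sup>2)"

text \<open>Ordered product X_{m_T} ... X_{m_1} for the word [m_1, ..., m_T].\<close>
primrec wprod :: "('m \<Rightarrow> 'd::finite \<Rightarrow> 'd \<Rightarrow> complex) \<Rightarrow> 'm list \<Rightarrow> 'd \<Rightarrow> 'd \<Rightarrow> complex" where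
  "wprod X [] = mone"
| "wprod X (m # ms) = mmult UNIV (wprod X ms) (X m)"

text \<open>Index set of C^D_A (x) C^D_S (x) (C^d)^{(x) T}.\<close>
definition carrierT :: "nat \<Rightarrow> ('d \<times> 'd \<times> 'm list) set" where
  "carrierT T = UNIV \<times> UNIV \<times> {ms. length ms = T}"

text \<open>The T-site state |Phi^X_T(theta)>, xi indexed by (ancilla, system).\<close>
definition PhiT :: "(real \<Rightarrow> 'm \<Rightarrow> 'd::finite \<Rightarrow> 'd \<Rightarrow> complex) \<Rightarrow> ('d \<times> 'd \<Rightarrow> complex)
                   \<Rightarrow> nat \<Rightarrow> real \<Rightarrow> 'd \<times> 'd \<times> 'm list \<Rightarrow> complex" where
  "PhiT X xi T th = (\<lambda>(a, s, ms). if length ms = T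
       then (\<Sum>s'\<in>UNIV. wprod (X th) ms s s' * xi (a, s')) else 0)"

text \<open>W_m(theta) = sum_{m'} (e^{-i theta h})_{m m'} K_{m'}(theta), i.e. W = (1 (x) e^{-i theta h}) V.\<close>
definition Wop :: "(real \<Rightarrow> 'm::finite \<Rightarrow> 'd \<Rightarrow> 'd \<Rightarrow> complex) \<Rightarrow> ('m \<Rightarrow> 'm \<Rightarrow> complex)
                   \<Rightarrow> real \<Rightarrow> 'm \<Rightarrow> 'd \<Rightarrow> 'd \<Rightarrow> complex" where
  "Wop K h th = (\<lambda>m i j. \<Sum>m'\<in>UNIV. mexp UNIV (\<lambda>a b. - \<i> * of_real th * h a b) m m' * K th m' i j)"

text \<open>h acting on the radiation qudit at (0-based) position tau.\<close>
definition hsite :: "('m \<Rightarrow> 'm \<Rightarrow> complex) \<Rightarrow> nat \<Rightarrow> 'd \<times> 'd \<times> 'm list \<Rightarrow> 'd \<times> 'd \<times> 'm list \<Rightarrow> complex" where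
  "hsite h tau = (\<lambda>(a, s, ms) (a', s', ms').
     if a = a' \<and> s = s' \<and> length ms = length ms' \<and> tau < length ms
        \<and> (\<forall>k<length ms. k \<noteq> tau \<longrightarrow> ms ! k = ms' ! k)
     then h (ms ! tau) (ms' ! tau) else 0)"

definition Htot :: "('m \<Rightarrow> 'm \<Rightarrow> complex) \<Rightarrow> nat \<Rightarrow> 'd \<times> 'd \<times> 'm list \<Rightarrow> 'd \<times> 'd \<times> 'm list \<Rightarrow> complex" where
  "Htot h T = (\<lambda>x y. \<Sum>tau<T. hsite h tau x y)"

end

(* W_m = sum_m' (e^{-i theta h})_{m m'} K_m', so the T-fold tensor power of e^{i theta h} on the
   radiation qudits, which equals e^{i theta H} because both solve Y' = i Y H, Y(0) = 1, maps
   Phi^W_T to Phi^V_T.  Hence dpsi_V = e^{i theta H} (i H psi_W + dpsi_W), and the unitary drops out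
   of the Fisher information, leaving the variance of H, the cross term Im <psi_W|H|dpsi_W> and
   <dpsi_W|dpsi_W> - |<dpsi_W|psi_W>|^2.  Via the purification each such overlap is a trace against
   rho_ss; peeling off one site at a time, the Kraus and fixed-point conditions together with the
   gauge condition sum_m W_m^dagger dW_m = 0 give <dpsi_W|psi_W> = 0 and <dpsi_W|dpsi_W> = T alpha^W. *)

theory Submission
  imports Defs
begin

subsection \<open>Matrices on a finite carrier\<close>

definition madd :: "('i \<Rightarrow> 'j \<Rightarrow> complex) \<Rightarrow> ('i \<Rightarrow> 'j \<Rightarrow> complex) \<Rightarrow> 'i \<Rightarrow> 'j \<Rightarrow> complex" where
  "madd A B = (\<lambda>i j. A i j + B i j)"

definition msum :: "'k set \<Rightarrow> ('k \<Rightarrow> 'i \<Rightarrow> 'j \<Rightarrow> complex) \<Rightarrow> 'i \<Rightarrow> 'j \<Rightarrow> complex" where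
  "msum S f = (\<lambda>i j. \<Sum>k\<in>S. f k i j)"

abbreviation mm :: "('d::finite \<Rightarrow> 'd \<Rightarrow> complex) \<Rightarrow> ('d \<Rightarrow> 'd \<Rightarrow> complex) \<Rightarrow> 'd \<Rightarrow> 'd \<Rightarrow> complex" where
  "mm \<equiv> mmult UNIV"

lemma mmult_assoc: "finite I \<Longrightarrow> mmult I (mmult I A B) C = mmult I A (mmult I B C)"
  unfolding mmult_def
  by (auto simp: sum_distrib_left sum_distrib_right mult.assoc intro!: ext sum.swap[THEN trans])

lemma mmult_madd_left: "mmult I (madd A B) C = madd (mmult I A C) (mmult I B C)"
  by (auto simp: mmult_def madd_def sum.distrib algebra_simps intro!: ext)

lemma mmult_madd_right: "mmult I C (madd A B) = madd (mmult I C A) (mmult I C B)"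
  by (auto simp: mmult_def madd_def sum.distrib algebra_simps intro!: ext)

lemma mmult_msum_left: "finite S \<Longrightarrow> mmult I (msum S f) C = msum S (\<lambda>k. mmult I (f k) C)"
  by (auto simp: mmult_def msum_def sum_distrib_right intro!: ext sum.swap)

lemma mmult_msum_right: "finite S \<Longrightarrow> mmult I C (msum S f) = msum S (\<lambda>k. mmult I C (f k))"
  by (auto simp: mmult_def msum_def sum_distrib_left intro!: ext sum.swap)

lemma msum_madd: "msum S (\<lambda>k. madd (f k) (g k)) = madd (msum S f) (msum S g)"
  by (auto simp: msum_def madd_def sum.distrib intro!: ext)

lemma madd_zero_left [simp]: "madd (\<lambda>i j. 0) A = A"
  and madd_zero_right [simp]: "madd A (\<lambda>i j. 0) = A"
  by (auto simp: madd_def)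

lemma mmult_zero_left [simp]: "mmult I (\<lambda>i j. 0) A = (\<lambda>i j. 0)"
  and mmult_zero_right [simp]: "mmult I A (\<lambda>i j. 0) = (\<lambda>i j. 0)"
  by (auto simp: mmult_def)

lemma adj_adj [simp]: "adj (adj A) = A"
  by (simp add: adj_def)

lemma adj_zero [simp]: "adj (\<lambda>i j. 0) = (\<lambda>i j. 0)"
  by (simp add: adj_def)

lemma adj_mone [simp]: "adj mone = mone"
  by (auto simp: adj_def mone_def intro!: ext)

lemma adj_mmult: "adj (mmult I A B) = mmult I (adj B) (adj A)"
  by (auto simp: mmult_def adj_def mult.commute intro!: ext)

lemma adj_madd: "adj (madd A B) = madd (adj A) (adj B)"
  by (simp add: madd_def adj_def)

lemma adj_msum: "adj (msum S f) = msum S (\<lambda>k. adj (f k))"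
  by (simp add: msum_def adj_def)

lemma mmult_mone_left: "finite I \<Longrightarrow> x \<in> I \<Longrightarrow> mmult I mone A x y = A x y"
  by (simp add: mmult_def mone_def if_distrib[of "\<lambda>c. c * _"] cong: if_cong)

lemma mmult_mone_right: "finite I \<Longrightarrow> y \<in> I \<Longrightarrow> mmult I A mone x y = A x y"
  by (simp add: mmult_def mone_def if_distrib[of "\<lambda>c. _ * c"] cong: if_cong)

lemma mm_mone_right [simp]: "mm A mone = A"
  by (auto intro!: ext mmult_mone_right)

lemma mmult_cong_left: "(\<And>w. w \<in> I \<Longrightarrow> A x w = A' x w) \<Longrightarrow> mmult I A B x y = mmult I A' B x y"
  by (simp add: mmult_def)

lemma mmult_cong_right: "(\<And>w. w \<in> I \<Longrightarrow> B w y = B' w y) \<Longrightarrow> mmult I A B x y = mmult I A B' x y"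
  by (simp add: mmult_def)

lemma mmult_scaled_left: "mmult I (\<lambda>a b. A a b * k) B x y = mmult I A B x y * k"
  and mmult_scaled_right: "mmult I A (\<lambda>a b. B a b * k) x y = mmult I A B x y * k"
  by (simp_all add: mmult_def sum_distrib_left sum_distrib_right mult_ac)

lemma mvec_mvec: "finite I \<Longrightarrow> mvec I A (mvec I B v) = mvec I (mmult I A B) v"
  unfolding mvec_def mmult_def
  by (auto simp: sum_distrib_left sum_distrib_right mult.assoc intro!: ext sum.swap[THEN trans])

lemma mvec_mone: "finite I \<Longrightarrow> x \<in> I \<Longrightarrow> mvec I mone v x = v x"
  by (simp add: mvec_def mone_def if_distrib[of "\<lambda>c. c * _"] cong: if_cong)

lemma inner_c_cong:
  "(\<And>x. x \<in> I \<Longrightarrow> u x = u' x) \<Longrightarrow> (\<And>x. x \<in> I \<Longrightarrow> v x = v' x) \<Longrightarrow> inner_c I u v = inner_c I u' v'"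
  by (simp add: inner_c_def)

lemma cnj_inner_c: "cnj (inner_c I u v) = inner_c I v u"
  by (simp add: inner_c_def mult.commute)

lemma Im_inner_c_self [simp]: "Im (inner_c I v v) = 0"
  by (simp add: inner_c_def)

lemma inner_c_mvec_left: "finite I \<Longrightarrow> inner_c I (mvec I A u) v = inner_c I u (mvec I (adj A) v)"
  unfolding inner_c_def mvec_def adj_def
  by (auto simp: sum_distrib_left sum_distrib_right mult_ac intro!: sum.swap[THEN trans])

lemma inner_c_unitary:
  assumes "finite I" and "\<And>x y. x \<in> I \<Longrightarrow> y \<in> I \<Longrightarrow> mmult I (adj U) U x y = mone x y"
  shows "inner_c I (mvec I U u) (mvec I U v) = inner_c I u v"
proof -
  have "inner_c I (mvec I U u) (mvec I U v) = inner_c I u (mvec I (mmult I (adj U) U) v)"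
    using assms(1) by (simp add: inner_c_mvec_left mvec_mvec)
  also have "\<dots> = inner_c I u (mvec I mone v)"
    using assms by (intro inner_c_cong) (auto simp: mvec_def)
  also have "\<dots> = inner_c I u v"
    using assms by (intro inner_c_cong) (auto simp: mvec_mone)
  finally show ?thesis .
qed

lemma mtrace_mm_commute: "mtrace (mm A B) = mtrace (mm B A)"
  unfolding mtrace_def mmult_def by (subst sum.swap) (simp add: mult.commute)

lemma mtrace_madd_left: "mtrace (mm (madd A B) R) = mtrace (mm A R) + mtrace (mm B R)"
  unfolding mmult_madd_left by (simp add: madd_def mtrace_def sum.distrib)

lemma mtrace_msum_left: "finite S \<Longrightarrow> mtrace (mm (msum S f) R) = (\<Sum>k\<in>S. mtrace (mm (f k) R))"
  unfolding mmult_msum_left by (unfold mtrace_def msum_def) (rule sum.swap)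

lemma mtrace_msum_right: "finite S \<Longrightarrow> mtrace (mm C (msum S f)) = (\<Sum>k\<in>S. mtrace (mm C (f k)))"
  unfolding mmult_msum_right by (unfold mtrace_def msum_def) (rule sum.swap)

subsection \<open>The matrix exponential\<close>

lemma mpow_entry_bound:
  assumes "finite I"
  shows "\<exists>N\<ge>0. \<forall>n. cmod (mpow I A n x y) \<le> N ^ n"
proof -
  define N where "N = 1 + (\<Sum>a\<in>I. \<Sum>b\<in>insert y I. cmod (A a b))"
  have N: "N \<ge> 1" unfolding N_def by (simp add: sum_nonneg)
  have column: "(\<Sum>w\<in>I. cmod (A w z)) \<le> N" if "z \<in> insert y I" for z
  proof -
    have "(\<Sum>w\<in>I. cmod (A w z)) \<le> (\<Sum>w\<in>I. \<Sum>b\<in>insert y I. cmod (A w b))"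
      using that assms by (intro sum_mono member_le_sum) auto
    then show ?thesis unfolding N_def by simp
  qed
  have "\<forall>z\<in>insert y I. cmod (mpow I A n x z) \<le> N ^ n" for n
  proof (induction n)
    case 0
    then show ?case by (auto simp: mone_def)
  next
    case (Suc n)
    show ?case
    proof
      fix z assume z: "z \<in> insert y I"
      have "cmod (mpow I A (Suc n) x z) \<le> (\<Sum>w\<in>I. cmod (mpow I A n x w) * cmod (A w z))"
        by (simp add: mmult_def) (rule order_trans[OF norm_sum], simp add: norm_mult)
      also have "\<dots> \<le> (\<Sum>w\<in>I. N ^ n * cmod (A w z))"
        using Suc.IH by (intro sum_mono mult_right_mono) auto
      also have "\<dots> \<le> N ^ n * N"
        using column[OF z] N by (simp add: sum_distrib_left[symmetric])
      finally show "cmod (mpow I A (Suc n) x z) \<le> N ^ Suc n"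
        by (simp add: mult.commute)
    qed
  qed
  then show ?thesis using N by (intro exI[of _ N]) auto
qed

lemma summable_mexp_series:
  assumes "finite I"
  shows "summable (\<lambda>n. mpow I A n x y / of_nat (fact n) * z ^ n)"
proof -
  obtain N where N: "N \<ge> 0" "\<And>n. cmod (mpow I A n x y) \<le> N ^ n"
    using mpow_entry_bound[OF assms] by blast
  show ?thesis
  proof (rule summable_comparison_test')
    show "summable (\<lambda>n. inverse (fact n) * (N * cmod z) ^ n)"
      by (rule summable_exp)
    fix n :: nat
    have "cmod (mpow I A n x y / of_nat (fact n) * z ^ n) = cmod (mpow I A n x y) * cmod z ^ n / fact n"
      by (simp add: norm_mult norm_divide norm_power)
    also have "\<dots> \<le> N ^ n * cmod z ^ n / fact n"
      using N by (intro divide_right_mono mult_right_mono) auto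
    finally show "norm (mpow I A n x y / of_nat (fact n) * z ^ n) \<le> inverse (fact n) * (N * cmod z) ^ n"
      by (simp add: power_mult_distrib field_simps)
  qed
qed

lemma mpow_scaled: "mpow I (\<lambda>a b. z * A a b) n = (\<lambda>a b. z ^ n * mpow I A n a b)"
  by (induction n) (auto simp: mone_def mmult_def sum_distrib_left mult_ac intro!: ext)

lemma mexp_scaled: "mexp I (\<lambda>a b. z * A a b) = (\<lambda>x y. \<Sum>n. mpow I A n x y / of_nat (fact n) * z ^ n)"
  by (simp add: mexp_def mpow_scaled mult_ac)

lemma mexp_zero: "mexp I (\<lambda>a b. 0) = mone"
proof (intro ext)
  fix x y
  have "mexp I (\<lambda>a b. 0 * mone a b) x y = (\<Sum>n. mpow I mone n x y / of_nat (fact n) * 0 ^ n)"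
    by (simp only: mexp_scaled)
  also have "\<dots> = mone x y"
    by (subst powser_zero) simp
  finally show "mexp I (\<lambda>a b. 0) x y = mone x y"
    by simp
qed

lemma mmult_suminf_left:
  assumes "finite I" and "\<And>w. w \<in> I \<Longrightarrow> summable (\<lambda>n. f n x w)"
  shows "mmult I (\<lambda>a b. \<Sum>n. f n a b) B x y = (\<Sum>n. mmult I (f n) B x y)"
proof -
  have "mmult I (\<lambda>a b. \<Sum>n. f n a b) B x y = (\<Sum>w\<in>I. \<Sum>n. f n x w * B w y)"
    unfolding mmult_def using assms(2) by (intro sum.cong refl suminf_mult2)
  also have "\<dots> = (\<Sum>n. \<Sum>w\<in>I. f n x w * B w y)"
    using assms by (intro suminf_sum[symmetric] summable_mult2) auto
  finally show ?thesis by (simp add: mmult_def)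
qed

lemma mmult_suminf_right:
  assumes "finite I" and "\<And>w. w \<in> I \<Longrightarrow> summable (\<lambda>n. f n w y)"
  shows "mmult I B (\<lambda>a b. \<Sum>n. f n a b) x y = (\<Sum>n. mmult I B (f n) x y)"
proof -
  have "mmult I B (\<lambda>a b. \<Sum>n. f n a b) x y = (\<Sum>w\<in>I. \<Sum>n. B x w * f n w y)"
    unfolding mmult_def using assms(2) by (intro sum.cong refl suminf_mult[symmetric])
  also have "\<dots> = (\<Sum>n. \<Sum>w\<in>I. B x w * f n w y)"
    using assms by (intro suminf_sum[symmetric] summable_mult) auto
  finally show ?thesis by (simp add: mmult_def)
qed

lemma mexp_scaled_has_field_derivative:
  assumes "finite I"
  shows "((\<lambda>z. mexp I (\<lambda>a b. z * A a b) x y) has_field_derivative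
           mmult I (mexp I (\<lambda>a b. z * A a b)) A x y) (at z)"
proof -
  define c where "c = (\<lambda>n. mpow I A n x y / of_nat (fact n))"
  have "((\<lambda>z. \<Sum>n. c n * z ^ n) has_field_derivative (\<Sum>n. diffs c n * z ^ n)) (at z)"
    by (rule termdiffs_strong_converges_everywhere)
       (use summable_mexp_series[OF assms] in \<open>simp add: c_def\<close>)
  moreover have "mmult I (mexp I (\<lambda>a b. z * A a b)) A x y
      = (\<Sum>n. mmult I (\<lambda>a b. mpow I A n a b / of_nat (fact n) * z ^ n) A x y)"
    unfolding mexp_scaled by (rule mmult_suminf_left[OF assms summable_mexp_series[OF assms]])
  moreover have "mmult I (\<lambda>a b. mpow I A n a b / of_nat (fact n) * z ^ n) A x y = diffs c n * z ^ n" for n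
    by (simp add: mmult_def diffs_def c_def sum_distrib_left sum_distrib_right sum_divide_distrib
        field_simps del: of_nat_Suc)
  ultimately show ?thesis by (simp add: mexp_scaled c_def)
qed

lemma mexp_has_vector_derivative:
  assumes "finite I"
  shows "((\<lambda>t. mexp I (\<lambda>a b. c * of_real t * M a b) x y) has_vector_derivative
           c * mmult I (mexp I (\<lambda>a b. c * of_real t * M a b)) M x y) (at t)"
proof -
  have "((\<lambda>t. c * of_real t) has_vector_derivative c) (at t)"
    by (auto intro!: derivative_eq_intros simp: has_vector_derivative_def scaleR_conv_of_real)
  from field_vector_diff_chain_at[OF this mexp_scaled_has_field_derivative[OF assms]]
  show ?thesis by (simp add: o_def mult.commute)
qed

lemma mpow_commute:
  assumes "finite I" and "x \<in> I" and "y \<in> I"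
  shows "mmult I A (mpow I A n) x y = mmult I (mpow I A n) A x y"
  using assms(2,3)
proof (induction n arbitrary: x y)
  case 0
  then show ?case using assms(1) by (simp add: mmult_mone_left mmult_mone_right)
next
  case (Suc n)
  have "mmult I A (mpow I A (Suc n)) x y = mmult I (mmult I A (mpow I A n)) A x y"
    using assms(1) by (simp add: mmult_assoc)
  also have "\<dots> = mmult I (mmult I (mpow I A n) A) A x y"
    using Suc by (intro mmult_cong_left) auto
  finally show ?case by simp
qed

lemma mexp_scaled_commute:
  assumes "finite I" and "x \<in> I" and "y \<in> I"
  shows "mmult I M (mexp I (\<lambda>a b. z * M a b)) x y = mmult I (mexp I (\<lambda>a b. z * M a b)) M x y"
proof -
  have series: "mexp I (\<lambda>a b. z * M a b) = (\<lambda>a b. \<Sum>n. mpow I M n a b * (z ^ n / of_nat (fact n)))"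
    by (simp add: mexp_scaled mult_ac)
  have summable: "summable (\<lambda>n. mpow I M n a b * (z ^ n / of_nat (fact n)))" for a b
    using summable_mexp_series[OF assms(1), of M a b z] by (simp add: mult_ac)
  have "mmult I M (mexp I (\<lambda>a b. z * M a b)) x y
      = (\<Sum>n. mmult I M (\<lambda>a b. mpow I M n a b * (z ^ n / of_nat (fact n))) x y)"
    unfolding series by (rule mmult_suminf_right[OF assms(1) summable])
  also have "\<dots> = (\<Sum>n. mmult I (\<lambda>a b. mpow I M n a b * (z ^ n / of_nat (fact n))) M x y)"
    unfolding mmult_scaled_left mmult_scaled_right using mpow_commute[OF assms] by simp
  also have "\<dots> = mmult I (mexp I (\<lambda>a b. z * M a b)) M x y"
    unfolding series by (rule mmult_suminf_left[OF assms(1) summable, symmetric])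
  finally show ?thesis .
qed

text \<open>The product \<open>Y(t) exp (-c t M)\<close> has derivative zero because \<open>M\<close> commutes with its
  exponential.\<close>

lemma ode_solution_mult_mexp_neg:
  assumes fin: "finite I"
    and dY: "\<And>t x y. x \<in> I \<Longrightarrow> y \<in> I \<Longrightarrow> ((\<lambda>s. Y s x y) has_vector_derivative c * mmult I (Y t) M x y) (at t)"
    and Y0: "\<And>x y. x \<in> I \<Longrightarrow> y \<in> I \<Longrightarrow> Y 0 x y = mone x y"
    and x: "x \<in> I" and y: "y \<in> I"
  shows "mmult I (Y t) (mexp I (\<lambda>a b. (- c) * of_real t * M a b)) x y = mone x y"
proof -
  define E where "E = (\<lambda>s. mexp I (\<lambda>a b. (- c) * of_real s * M a b))"
  define Z where "Z = (\<lambda>s. \<Sum>w\<in>I. Y s x w * E s w y)"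
  have dE: "((\<lambda>s. E s w y) has_vector_derivative (- c) * mmult I (E s) M w y) (at s)" for s w
    unfolding E_def by (rule mexp_has_vector_derivative[OF fin])
  have commute: "mmult I (mmult I (Y s) M) (E s) x y = mmult I (Y s) (mmult I (E s) M) x y" for s
    unfolding mmult_assoc[OF fin] E_def
    using fin y by (intro mmult_cong_right mexp_scaled_commute) auto
  have "(Z has_vector_derivative 0) (at s within UNIV)" for s
  proof -
    have "(Z has_vector_derivative
        (\<Sum>w\<in>I. Y s x w * ((- c) * mmult I (E s) M w y) + c * mmult I (Y s) M x w * E s w y)) (at s)"
      unfolding Z_def by (intro has_vector_derivative_sum has_vector_derivative_mult dY dE x) auto
    also have "(\<Sum>w\<in>I. Y s x w * ((- c) * mmult I (E s) M w y) + c * mmult I (Y s) M x w * E s w y)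
        = c * (\<Sum>w\<in>I. mmult I (Y s) M x w * E s w y) - c * (\<Sum>w\<in>I. Y s x w * mmult I (E s) M w y)"
      by (unfold sum_distrib_left sum_subtractf[symmetric]) (intro sum.cong refl, simp add: algebra_simps)
    also have "\<dots> = 0"
      using commute[of s] by (simp add: mmult_def)
    finally show ?thesis .
  qed
  then obtain k where "\<And>s. Z s = k"
    using has_vector_derivative_zero_constant[OF convex_UNIV, of Z] by auto
  then have "Z t = Z 0"
    by simp
  also have "Z 0 = mmult I mone mone x y"
    unfolding Z_def E_def mmult_def using Y0 x by (intro sum.cong refl) (simp add: mexp_zero)
  also have "\<dots> = mone x y"
    using fin x by (rule mmult_mone_left)
  finally show ?thesis
    unfolding Z_def E_def by (simp add: mmult_def)
qed

lemma mexp_mult_mexp_neg: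
  assumes "finite I" and "x \<in> I" and "y \<in> I"
  shows "mmult I (mexp I (\<lambda>a b. c * of_real t * M a b)) (mexp I (\<lambda>a b. (- c) * of_real t * M a b)) x y = mone x y"
  by (rule ode_solution_mult_mexp_neg[OF assms(1) _ _ assms(2,3)])
     (auto intro: mexp_has_vector_derivative[OF assms(1)] simp: mexp_zero)

lemma ode_solution_eq_mexp:
  assumes fin: "finite I"
    and dY: "\<And>t x y. x \<in> I \<Longrightarrow> y \<in> I \<Longrightarrow> ((\<lambda>s. Y s x y) has_vector_derivative c * mmult I (Y t) M x y) (at t)"
    and Y0: "\<And>x y. x \<in> I \<Longrightarrow> y \<in> I \<Longrightarrow> Y 0 x y = mone x y"
    and x: "x \<in> I" and y: "y \<in> I"
  shows "Y t x y = mexp I (\<lambda>a b. c * of_real t * M a b) x y"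
proof -
  define E where "E = mexp I (\<lambda>a b. c * of_real t * M a b)"
  define E' where "E' = mexp I (\<lambda>a b. (- c) * of_real t * M a b)"
  have "Y t x y = mmult I (Y t) mone x y"
    using fin y by (rule mmult_mone_right[symmetric])
  also have "\<dots> = mmult I (Y t) (mmult I E' E) x y"
    using mexp_mult_mexp_neg[OF fin _ y, of _ "- c" t M]
    unfolding E_def E'_def by (intro mmult_cong_right) simp
  also have "\<dots> = mmult I (mmult I (Y t) E') E x y"
    using fin by (simp add: mmult_assoc)
  also have "\<dots> = mmult I mone E x y"
    using ode_solution_mult_mexp_neg[OF fin dY Y0 x] unfolding E'_def by (intro mmult_cong_left) auto
  also have "\<dots> = E x y"
    using fin x by (rule mmult_mone_left)
  finally show ?thesis unfolding E_def .
qed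

lemma cnj_mpow:
  assumes "finite I" and "x \<in> I" and "y \<in> I"
  shows "cnj (mpow I A n y x) = mpow I (adj A) n x y"
  using assms(2,3)
proof (induction n arbitrary: x y)
  case 0
  then show ?case by (auto simp: mone_def)
next
  case (Suc n)
  have "cnj (mpow I A (Suc n) y x) = (\<Sum>w\<in>I. adj A x w * cnj (mpow I A n y w))"
    by (simp add: mmult_def adj_def mult.commute)
  also have "\<dots> = mmult I (adj A) (mpow I (adj A) n) x y"
    unfolding mmult_def using Suc by (intro sum.cong refl) auto
  also have "\<dots> = mpow I (adj A) (Suc n) x y"
    using mpow_commute[OF assms(1) Suc.prems] by simp
  finally show ?case .
qed

lemma cnj_mexp:
  assumes "finite I" and "x \<in> I" and "y \<in> I"
  shows "cnj (mexp I A y x) = mexp I (adj A) x y"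
proof -
  have "(\<lambda>n. cnj (mpow I A n y x / of_nat (fact n))) sums cnj (mexp I A y x)"
    unfolding mexp_def sums_cnj
    using summable_mexp_series[OF assms(1), of A y x 1] by (simp add: summable_sums)
  then show ?thesis
    unfolding mexp_def using cnj_mpow[OF assms] by (simp add: sums_iff)
qed

lemma mexp_unitary:
  assumes fin: "finite I" and herm: "\<And>a b. M a b = cnj (M b a)" and imag: "cnj c = - c"
    and x: "x \<in> I" and y: "y \<in> I"
  shows "mmult I (adj (mexp I (\<lambda>a b. c * of_real t * M a b))) (mexp I (\<lambda>a b. c * of_real t * M a b)) x y
    = mone x y"
proof -
  have "adj (\<lambda>a b. c * of_real t * M a b) = (\<lambda>a b. (- c) * of_real t * M a b)"
    unfolding adj_def by (intro ext) (simp add: imag flip: herm)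
  then have "adj (mexp I (\<lambda>a b. c * of_real t * M a b)) x w = mexp I (\<lambda>a b. (- c) * of_real t * M a b) x w"
    if "w \<in> I" for w
    using cnj_mexp[OF fin x that] by (simp add: adj_def)
  then have "mmult I (adj (mexp I (\<lambda>a b. c * of_real t * M a b))) (mexp I (\<lambda>a b. c * of_real t * M a b)) x y
      = mmult I (mexp I (\<lambda>a b. (- c) * of_real t * M a b)) (mexp I (\<lambda>a b. c * of_real t * M a b)) x y"
    by (rule mmult_cong_left)
  also have "\<dots> = mone x y"
    using mexp_mult_mexp_neg[OF fin x y, of "- c" t M] by simp
  finally show ?thesis .
qed

subsection \<open>Tensor powers on the radiation qudits\<close>

lemma finite_carrierT: "finite (carrierT T :: ('d::finite \<times> 'd \<times> 'm::finite list) set)"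
  unfolding carrierT_def using finite_lists_length_eq[of "UNIV :: 'm set" T] by simp

lemma sum_carrierT:
  "(\<Sum>y\<in>carrierT T. f y) = (\<Sum>a\<in>UNIV. \<Sum>s\<in>UNIV. \<Sum>ys\<in>{ys. length ys = T}. f (a, s, ys))"
  for f :: "'d::finite \<times> 'd \<times> 'm::finite list \<Rightarrow> complex"
  unfolding carrierT_def by (simp add: sum.cartesian_product)

lemma sum_lists_length_Suc:
  "(\<Sum>ys\<in>{ys. length ys = Suc n}. f ys) = (\<Sum>y\<in>UNIV. \<Sum>ys\<in>{ys. length ys = n}. f (y # ys))"
  for f :: "'m::finite list \<Rightarrow> 'a::comm_monoid_add"
proof -
  have "{ys :: 'm list. length ys = Suc n} = case_prod Cons ` (UNIV \<times> {ys. length ys = n})"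
    by (auto simp: length_Suc_conv image_iff)
  moreover have "inj_on (case_prod Cons) (UNIV \<times> {ys :: 'm list. length ys = n})"
    by (auto simp: inj_on_def)
  ultimately show ?thesis
    by (simp add: sum.reindex sum.cartesian_product split_def)
qed

definition tensor_power :: "('m \<Rightarrow> 'm \<Rightarrow> complex) \<Rightarrow> 'm list \<Rightarrow> 'm list \<Rightarrow> complex" where
  "tensor_power F xs ys = (\<Prod>k<length xs. F (xs ! k) (ys ! k))"

text \<open>The operator \<open>1\<^sub>A \<otimes> 1\<^sub>S \<otimes> F\<^sup>\<otimes>\<^sup>T\<close> on the \<open>T\<close>-site carrier.\<close>

definition rad_tensor :: "('m \<Rightarrow> 'm \<Rightarrow> complex) \<Rightarrow> 'd \<times> 'd \<times> 'm list \<Rightarrow> 'd \<times> 'd \<times> 'm list \<Rightarrow> complex" where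
  "rad_tensor F = (\<lambda>(a, s, xs) (a', s', ys).
     if a = a' \<and> s = s' \<and> length xs = length ys then tensor_power F xs ys else 0)"

lemma tensor_power_Cons: "tensor_power F (x # xs) (y # ys) = F x y * tensor_power F xs ys"
  unfolding tensor_power_def by (simp only: length_Cons prod.lessThan_Suc_shift) simp

lemma tensor_power_mone:
  assumes "length xs = length ys"
  shows "tensor_power mone xs ys = (if xs = ys then 1 else 0)"
proof (cases "xs = ys")
  case False
  then obtain k where "k < length xs" "xs ! k \<noteq> ys ! k"
    using assms nth_equalityI by metis
  then show ?thesis
    using False by (auto simp: tensor_power_def mone_def intro!: prod_zero)
qed (simp add: tensor_power_def mone_def)

lemma rad_tensor_mone:
  assumes "x \<in> carrierT T" and "y \<in> carrierT T"
  shows "rad_tensor mone x y = mone x y"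
proof -
  obtain a s xs a' s' ys where "x = (a, s, xs)" "y = (a', s', ys)" "length xs = T" "length ys = T"
    using assms by (cases x, cases y) (auto simp: carrierT_def)
  then show ?thesis
    unfolding rad_tensor_def by (simp add: tensor_power_mone) (auto simp: mone_def)
qed

lemma sum_rad_tensor:
  fixes g :: "'d::finite \<times> 'd \<times> 'm::finite list \<Rightarrow> complex"
  assumes "length xs = T"
  shows "(\<Sum>y\<in>carrierT T. rad_tensor F (a, s, xs) y * g y)
    = (\<Sum>ys\<in>{ys. length ys = T}. tensor_power F xs ys * g (a, s, ys))"
proof -
  define S where "S = (\<Sum>ys\<in>{ys. length ys = T}. tensor_power F xs ys * g (a, s, ys))"
  have "(\<Sum>ys\<in>{ys. length ys = T}. rad_tensor F (a, s, xs) (a', s', ys) * g (a', s', ys))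
      = (if a' = a then if s' = s then S else 0 else 0)" for a' s'
    using assms by (cases "a' = a \<and> s' = s") (auto simp: rad_tensor_def S_def intro!: sum.cong)
  then have "(\<Sum>y\<in>carrierT T. rad_tensor F (a, s, xs) y * g y)
      = (\<Sum>s'\<in>UNIV. \<Sum>a'\<in>UNIV. if a' = a then if s' = s then S else 0 else 0)"
    unfolding sum_carrierT by (subst sum.swap) simp
  also have "\<dots> = S"
    by simp
  finally show ?thesis
    unfolding S_def .
qed

lemma has_vector_derivative_prod:
  fixes f :: "'i \<Rightarrow> real \<Rightarrow> complex"
  assumes "\<And>i. i \<in> S \<Longrightarrow> (f i has_vector_derivative f' i) (at t)"
  shows "((\<lambda>t. \<Prod>i\<in>S. f i t) has_vector_derivative (\<Sum>i\<in>S. f' i * (\<Prod>j\<in>S - {i}. f j t))) (at t)"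
proof -
  have "((\<lambda>t. \<Prod>i\<in>S. f i t) has_derivative (\<lambda>y. \<Sum>i\<in>S. (y *\<^sub>R f' i) * (\<Prod>j\<in>S - {i}. f j t))) (at t)"
    using assms by (intro has_derivative_prod) (auto simp: has_vector_derivative_def)
  then show ?thesis
    unfolding has_vector_derivative_def
    by (rule has_derivative_eq_rhs) (auto intro!: ext simp: scaleR_sum_right)
qed

lemma mmult_rad_tensor_hsite:
  fixes F h :: "'m::finite \<Rightarrow> 'm \<Rightarrow> complex"
  assumes tau: "tau < T" and lx: "length xs = T" and ly: "length ys = T"
  shows "mmult (carrierT T) (rad_tensor F) (hsite h tau) (a, s, xs) (a' :: 'd::finite, s', ys)
    = (if a = a' \<and> s = s' then mm F h (xs ! tau) (ys ! tau) * (\<Prod>k\<in>{..<T} - {tau}. F (xs ! k) (ys ! k))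
       else 0)"
proof -
  define g where "g = (\<lambda>m. (a', s', ys[tau := m]))"
  have g_carrier: "range g \<subseteq> carrierT T"
    using ly by (auto simp: g_def carrierT_def)
  have "inj g"
    using tau ly by (auto simp: g_def inj_def dest: arg_cong[where f = "\<lambda>l. l ! tau"])
  have outside: "rad_tensor F (a, s, xs) z * hsite h tau z (a', s', ys) = 0"
    if "z \<in> carrierT T - range g" for z
  proof (rule ccontr)
    obtain a'' s'' zs where z: "z = (a'', s'', zs)"
      by (cases z)
    assume "rad_tensor F (a, s, xs) z * hsite h tau z (a', s', ys) \<noteq> 0"
    then have "a'' = a'" "s'' = s'" "zs = ys[tau := zs ! tau]"
      unfolding z hsite_def by (auto split: if_splits intro!: nth_equalityI simp: nth_list_update)
    then show False
      using that by (auto simp: z g_def)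
  qed
  have tensor_update: "tensor_power F xs (ys[tau := m])
      = F (xs ! tau) m * (\<Prod>k\<in>{..<T} - {tau}. F (xs ! k) (ys ! k))" for m
    unfolding tensor_power_def lx using tau ly
    by (subst prod.remove[of _ tau]) (auto intro!: prod.cong simp: nth_list_update)
  have "mmult (carrierT T) (rad_tensor F) (hsite h tau) (a, s, xs) (a', s', ys)
      = (\<Sum>z\<in>range g. rad_tensor F (a, s, xs) z * hsite h tau z (a', s', ys))"
    unfolding mmult_def
    by (rule sum.mono_neutral_right[OF finite_carrierT g_carrier]) (use outside in blast)
  also have "\<dots> = (\<Sum>m\<in>UNIV. rad_tensor F (a, s, xs) (g m) * hsite h tau (g m) (a', s', ys))"
    by (simp add: sum.reindex[OF \<open>inj g\<close>])
  also have "\<dots> = (\<Sum>m\<in>UNIV. (if a = a' \<and> s = s'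
      then F (xs ! tau) m * (\<Prod>k\<in>{..<T} - {tau}. F (xs ! k) (ys ! k)) else 0) * h m (ys ! tau))"
    using tau lx ly by (intro sum.cong refl) (simp add: rad_tensor_def hsite_def g_def tensor_update)
  also have "\<dots> = (if a = a' \<and> s = s'
      then mm F h (xs ! tau) (ys ! tau) * (\<Prod>k\<in>{..<T} - {tau}. F (xs ! k) (ys ! k)) else 0)"
    by (auto simp: mmult_def sum_distrib_right mult_ac)
  finally show ?thesis .
qed

lemma rad_tensor_has_vector_derivative:
  fixes F :: "real \<Rightarrow> 'm::finite \<Rightarrow> 'm \<Rightarrow> complex"
  assumes dF: "\<And>i j. ((\<lambda>t. F t i j) has_vector_derivative c * mm (F t0) h i j) (at t0)"
    and x: "x \<in> carrierT T" and y: "y \<in> (carrierT T :: ('d::finite \<times> 'd \<times> 'm list) set)"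
  shows "((\<lambda>t. rad_tensor (F t) x y) has_vector_derivative
           c * mmult (carrierT T) (rad_tensor (F t0)) (Htot h T) x y) (at t0)"
proof -
  obtain a s xs a' s' ys where xy: "x = (a, s, xs)" "y = (a', s', ys)"
    by (cases x, cases y)
  have lx: "length xs = T" and ly: "length ys = T"
    using x y xy by (auto simp: carrierT_def)
  have H: "mmult (carrierT T) (rad_tensor (F t0)) (Htot h T) x y = (\<Sum>k<T. if a = a' \<and> s = s'
      then mm (F t0) h (xs ! k) (ys ! k) * (\<Prod>j\<in>{..<T} - {k}. F t0 (xs ! j) (ys ! j)) else 0)"
  proof -
    have "mmult (carrierT T) (rad_tensor (F t0)) (Htot h T) x y
        = (\<Sum>k<T. mmult (carrierT T) (rad_tensor (F t0)) (hsite h k) x y)"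
      unfolding mmult_def Htot_def by (simp add: sum_distrib_left sum.swap[of _ "{..<T}"])
    then show ?thesis
      unfolding xy using lx ly by (simp add: mmult_rad_tensor_hsite)
  qed
  show ?thesis
  proof (cases "a = a' \<and> s = s'")
    case True
    then have "(\<lambda>t. rad_tensor (F t) x y) = (\<lambda>t. \<Prod>k<T. F t (xs ! k) (ys ! k))"
      using lx ly by (simp add: xy rad_tensor_def tensor_power_def)
    moreover have "((\<lambda>t. \<Prod>k<T. F t (xs ! k) (ys ! k)) has_vector_derivative
        (\<Sum>k<T. c * mm (F t0) h (xs ! k) (ys ! k) * (\<Prod>j\<in>{..<T} - {k}. F t0 (xs ! j) (ys ! j)))) (at t0)"
      by (intro has_vector_derivative_prod dF)
    ultimately show ?thesis
      unfolding H using True by (simp add: sum_distrib_left mult.assoc)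
  next
    case False
    then have "(\<lambda>t. rad_tensor (F t) x y) = (\<lambda>t. 0)"
      by (auto simp: xy rad_tensor_def intro!: ext)
    moreover have "mmult (carrierT T) (rad_tensor (F t0)) (Htot h T) x y = 0"
      unfolding H using False by (intro sum.neutral) auto
    ultimately show ?thesis
      by simp
  qed
qed

lemma rad_tensor_mexp:
  fixes h :: "'m::finite \<Rightarrow> 'm \<Rightarrow> complex"
  assumes "x \<in> carrierT T" and "y \<in> (carrierT T :: ('d::finite \<times> 'd \<times> 'm list) set)"
  shows "rad_tensor (mexp UNIV (\<lambda>a b. c * of_real t * h a b)) x y
    = mexp (carrierT T) (\<lambda>x y. c * of_real t * Htot h T x y) x y"
  using finite_carrierT _ _ assms
proof (rule ode_solution_eq_mexp)
  show "((\<lambda>s. rad_tensor (mexp UNIV (\<lambda>a b. c * of_real s * h a b)) x y) has_vector_derivative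
      c * mmult (carrierT T) (rad_tensor (mexp UNIV (\<lambda>a b. c * of_real t * h a b))) (Htot h T) x y) (at t)"
    if "x \<in> carrierT T" "y \<in> carrierT T" for t and x y :: "'d \<times> 'd \<times> 'm list"
    using that by (intro rad_tensor_has_vector_derivative mexp_has_vector_derivative) simp_all
  show "rad_tensor (mexp UNIV (\<lambda>a b. c * of_real 0 * h a b)) x y = mone x y"
    if "x \<in> carrierT T" "y \<in> carrierT T" for x y :: "'d \<times> 'd \<times> 'm list"
    using that by (simp add: mexp_zero rad_tensor_mone)
qed

subsection \<open>Unitary mixing of Kraus operators\<close>

definition kraus_mix :: "('m \<Rightarrow> 'm \<Rightarrow> complex) \<Rightarrow> ('m \<Rightarrow> 'd \<Rightarrow> 'd \<Rightarrow> complex) \<Rightarrow> 'm \<Rightarrow> 'd \<Rightarrow> 'd \<Rightarrow> complex" where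
  "kraus_mix U K = (\<lambda>m i j. \<Sum>m'\<in>UNIV. U m m' * K m' i j)"

lemma Wop_eq_kraus_mix: "Wop K h t = kraus_mix (mexp UNIV (\<lambda>a b. - \<i> * of_real t * h a b)) (K t)"
  by (simp add: Wop_def kraus_mix_def)

lemma kraus_mix_kraus_mix:
  "kraus_mix A (kraus_mix B K) = kraus_mix (mm A B) K" for A :: "'m::finite \<Rightarrow> 'm \<Rightarrow> complex"
  unfolding kraus_mix_def mmult_def
  by (auto simp: sum_distrib_left sum_distrib_right mult.assoc intro!: ext sum.swap[THEN trans])

lemma kraus_mix_mone [simp]: "kraus_mix mone K = K" for K :: "'m::finite \<Rightarrow> 'd \<Rightarrow> 'd \<Rightarrow> complex"
  by (simp add: kraus_mix_def mone_def if_distrib[of "\<lambda>c. c * _"] cong: if_cong)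

lemma kraus_mix_Wop:
  fixes K :: "real \<Rightarrow> 'm::finite \<Rightarrow> 'd \<Rightarrow> 'd \<Rightarrow> complex"
  shows "kraus_mix (mexp UNIV (\<lambda>a b. \<i> * of_real t * h a b)) (Wop K h t) = K t"
proof -
  have "mm (mexp UNIV (\<lambda>a b. \<i> * of_real t * h a b)) (mexp UNIV (\<lambda>a b. - \<i> * of_real t * h a b)) = mone"
    by (intro ext mexp_mult_mexp_neg) simp_all
  then show ?thesis
    by (simp add: Wop_eq_kraus_mix kraus_mix_kraus_mix)
qed

lemma sum_tensor_power_wprod:
  fixes F :: "'m::finite \<Rightarrow> 'm \<Rightarrow> complex" and K :: "'m \<Rightarrow> 'd::finite \<Rightarrow> 'd \<Rightarrow> complex"
  assumes "length xs = n"
  shows "(\<Sum>ys\<in>{ys. length ys = n}. tensor_power F xs ys * wprod K ys i j) = wprod (kraus_mix F K) xs i j"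
  using assms
proof (induction n arbitrary: xs j)
  case 0
  then show ?case by (simp add: tensor_power_def)
next
  case (Suc n)
  then obtain x xs' where xs: "xs = x # xs'" and "length xs' = n"
    by (auto simp: length_Suc_conv)
  have "(\<Sum>ys\<in>{ys. length ys = Suc n}. tensor_power F xs ys * wprod K ys i j)
      = (\<Sum>z\<in>UNIV. \<Sum>y\<in>UNIV. (\<Sum>ys\<in>{ys. length ys = n}. tensor_power F xs' ys * wprod K ys i z)
          * (F x y * K y z j))"
    unfolding sum_lists_length_Suc xs
    by (simp add: tensor_power_Cons mmult_def sum_distrib_left sum_distrib_right mult_ac)
       (subst sum.swap, rule sum.cong, simp, subst sum.swap, simp)
  also have "\<dots> = (\<Sum>z\<in>UNIV. wprod (kraus_mix F K) xs' i z * kraus_mix F K x z j)"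
    using Suc.IH[OF \<open>length xs' = n\<close>] by (simp add: kraus_mix_def sum_distrib_left)
  also have "\<dots> = wprod (kraus_mix F K) xs i j"
    by (simp add: xs mmult_def)
  finally show ?case .
qed

lemma PhiT_eq_mexp_Htot_PhiT_Wop:
  fixes K :: "real \<Rightarrow> 'm::finite \<Rightarrow> 'd::finite \<Rightarrow> 'd \<Rightarrow> complex"
  assumes "x \<in> carrierT T"
  shows "PhiT K xi T t x
    = mvec (carrierT T) (mexp (carrierT T) (\<lambda>x y. \<i> * of_real t * Htot h T x y)) (PhiT (Wop K h) xi T t) x"
proof -
  obtain a s xs where x: "x = (a, s, xs)" and lx: "length xs = T"
    using assms by (cases x) (auto simp: carrierT_def)
  define F where "F = mexp UNIV (\<lambda>a b. \<i> * of_real t * h a b)"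
  have "mvec (carrierT T) (mexp (carrierT T) (\<lambda>x y. \<i> * of_real t * Htot h T x y)) (PhiT (Wop K h) xi T t) x
      = (\<Sum>y\<in>carrierT T. rad_tensor F x y * PhiT (Wop K h) xi T t y)"
    unfolding mvec_def F_def using assms by (intro sum.cong refl) (simp add: rad_tensor_mexp)
  also have "\<dots> = (\<Sum>ys\<in>{ys. length ys = T}. \<Sum>s'\<in>UNIV. tensor_power F xs ys * wprod (Wop K h t) ys s s' * xi (a, s'))"
    unfolding x sum_rad_tensor[OF lx] by (intro sum.cong refl) (simp add: PhiT_def sum_distrib_left mult_ac)
  also have "\<dots> = (\<Sum>s'\<in>UNIV. (\<Sum>ys\<in>{ys. length ys = T}. tensor_power F xs ys * wprod (Wop K h t) ys s s')
      * xi (a, s'))"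
    by (subst sum.swap) (simp add: sum_distrib_right)
  also have "\<dots> = (\<Sum>s'\<in>UNIV. wprod (kraus_mix F (Wop K h t)) xs s s' * xi (a, s'))"
    by (simp only: sum_tensor_power_wprod[OF lx])
  also have "\<dots> = PhiT K xi T t x"
    by (simp add: F_def kraus_mix_Wop PhiT_def x lx)
  finally show ?thesis ..
qed

lemma sum_cnj_kraus_mix_unitary:
  fixes U :: "'m::finite \<Rightarrow> 'm \<Rightarrow> complex"
  assumes "mm (adj U) U = mone"
  shows "(\<Sum>m\<in>UNIV. cnj (kraus_mix U K m p q) * kraus_mix U K m r u) = (\<Sum>m\<in>UNIV. cnj (K m p q) * K m r u)"
proof -
  have "kraus_mix U K m p q = mvec UNIV U (\<lambda>m. K m p q) m" for m p q
    by (simp add: kraus_mix_def mvec_def)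
  then have "(\<Sum>m\<in>UNIV. cnj (kraus_mix U K m p q) * kraus_mix U K m r u)
      = inner_c UNIV (mvec UNIV U (\<lambda>m. K m p q)) (mvec UNIV U (\<lambda>m. K m r u))"
    by (simp add: inner_c_def)
  also have "\<dots> = inner_c UNIV (\<lambda>m. K m p q) (\<lambda>m. K m r u)"
    using assms by (intro inner_c_unitary) simp_all
  finally show ?thesis
    by (simp add: inner_c_def)
qed

lemma kraus_mix_unitary_kraus:
  fixes U :: "'m::finite \<Rightarrow> 'm \<Rightarrow> complex" and K :: "'m \<Rightarrow> 'd::finite \<Rightarrow> 'd \<Rightarrow> complex"
  assumes "mm (adj U) U = mone"
  shows "msum UNIV (\<lambda>m. mm (adj (kraus_mix U K m)) (kraus_mix U K m)) = msum UNIV (\<lambda>m. mm (adj (K m)) (K m))"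
  unfolding msum_def mmult_def adj_def
  by (subst (1 2) sum.swap) (simp only: sum_cnj_kraus_mix_unitary[OF assms])

lemma kraus_mix_unitary_channel:
  fixes U :: "'m::finite \<Rightarrow> 'm \<Rightarrow> complex" and K :: "'m \<Rightarrow> 'd::finite \<Rightarrow> 'd \<Rightarrow> complex"
  assumes "mm (adj U) U = mone"
  shows "msum UNIV (\<lambda>m. mm (mm (kraus_mix U K m) R) (adj (kraus_mix U K m)))
    = msum UNIV (\<lambda>m. mm (mm (K m) R) (adj (K m)))"
proof -
  have channel: "msum UNIV (\<lambda>m. mm (mm (L m) R) (adj (L m))) a b
      = (\<Sum>k\<in>UNIV. \<Sum>l\<in>UNIV. R k l * (\<Sum>m\<in>UNIV. cnj (L m b l) * L m a k))"
    for L :: "'m \<Rightarrow> 'd \<Rightarrow> 'd \<Rightarrow> complex" and a b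
    unfolding msum_def mmult_def adj_def sum_distrib_left sum_distrib_right
    by (subst sum.swap, subst (2) sum.swap, subst (3) sum.swap) (simp add: mult_ac)
  show ?thesis
    by (intro ext) (simp only: channel sum_cnj_kraus_mix_unitary[OF assms])
qed

subsection \<open>Derivatives of matrix product states\<close>

primrec dwprod :: "('m \<Rightarrow> 'd::finite \<Rightarrow> 'd \<Rightarrow> complex) \<Rightarrow> ('m \<Rightarrow> 'd \<Rightarrow> 'd \<Rightarrow> complex) \<Rightarrow> 'm list \<Rightarrow> 'd \<Rightarrow> 'd \<Rightarrow> complex" where
  "dwprod X D [] = (\<lambda>i j. 0)"
| "dwprod X D (m # ms) = madd (mm (dwprod X D ms) (X m)) (mm (wprod X ms) (D m))"

definition mps_state :: "('m list \<Rightarrow> 'd \<Rightarrow> 'd \<Rightarrow> complex) \<Rightarrow> ('d \<times> 'd \<Rightarrow> complex) \<Rightarrow> nat \<Rightarrow> 'd::finite \<times> 'd \<times> 'm list \<Rightarrow> complex" where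
  "mps_state A xi T = (\<lambda>(a, s, ms). if length ms = T then \<Sum>s'\<in>UNIV. A ms s s' * xi (a, s') else 0)"

lemma PhiT_eq_mps_state: "PhiT X xi T t = mps_state (wprod (X t)) xi T"
  by (simp add: PhiT_def mps_state_def)

lemma wprod_has_vector_derivative:
  assumes "\<And>m i j. ((\<lambda>s. X s m i j) has_vector_derivative D m i j) (at t)"
  shows "((\<lambda>s. wprod (X s) ms i j) has_vector_derivative dwprod (X t) D ms i j) (at t)"
proof (induction ms arbitrary: j)
  case Nil
  then show ?case by (simp add: has_vector_derivative_const)
next
  case (Cons m ms)
  have "((\<lambda>s. \<Sum>z\<in>UNIV. wprod (X s) ms i z * X s m z j) has_vector_derivative
      (\<Sum>z\<in>UNIV. wprod (X t) ms i z * D m z j + dwprod (X t) D ms i z * X t m z j)) (at t)"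
    by (intro has_vector_derivative_sum has_vector_derivative_mult Cons assms)
  then show ?case
    by (simp add: madd_def mmult_def sum.distrib add.commute)
qed

lemma mps_state_has_vector_derivative:
  assumes "\<And>ms i j. ((\<lambda>t. A t ms i j) has_vector_derivative A' ms i j) (at t0)"
  shows "((\<lambda>t. mps_state (A t) xi T x) has_vector_derivative mps_state A' xi T x) (at t0)"
proof -
  obtain a s ms where x: "x = (a, s, ms)"
    by (cases x)
  show ?thesis
    unfolding x mps_state_def
    by (cases "length ms = T")
       (simp_all add: has_vector_derivative_const has_vector_derivative_sum has_vector_derivative_mult_left assms)
qed

lemma Wop_has_vector_derivative:
  fixes K :: "real \<Rightarrow> 'm::finite \<Rightarrow> 'd \<Rightarrow> 'd \<Rightarrow> complex"
  assumes "\<And>m i j. (\<lambda>s. K s m i j) differentiable (at t)"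
  shows "((\<lambda>s. Wop K h s m i j) has_vector_derivative mderiv (\<lambda>t. Wop K h t m) t i j) (at t)"
proof -
  have "(\<lambda>s. Wop K h s m i j) differentiable (at t)"
    unfolding Wop_def
    by (intro differentiable_sum ballI differentiable_mult assms
        differentiableI_vector[OF mexp_has_vector_derivative]) simp_all
  then show ?thesis
    by (simp add: mderiv_def vector_derivative_works)
qed

lemma mtrace_mm_rotate: "mtrace (mm (mm (mm A C) B) R) = mtrace (mm C (mm (mm B R) A))"
  by (metis mmult_assoc finite_class.finite_UNIV mtrace_mm_commute)

text \<open>The purification says \<open>\<rho> = \<Xi> \<Xi>\<^sup>\<dagger>\<close> for the matrix \<open>\<Xi>\<^sub>s\<^sub>a = \<xi>(a, s)\<close>.\<close>

lemma inner_c_mps_state: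
  fixes A B :: "'m::finite list \<Rightarrow> 'd::finite \<Rightarrow> 'd \<Rightarrow> complex"
  assumes purif: "\<And>s s'. rho s s' = (\<Sum>a\<in>UNIV. xi (a, s) * cnj (xi (a, s')))"
  shows "inner_c (carrierT T) (mps_state A xi T) (mps_state B xi T)
    = mtrace (mm (msum {ms. length ms = T} (\<lambda>ms. mm (adj (A ms)) (B ms))) rho)"
proof -
  define Xi where "Xi = (\<lambda>s a. xi (a, s))"
  have rho: "rho = mm Xi (adj Xi)"
    by (auto intro!: ext simp: purif mmult_def Xi_def adj_def)
  have per_word: "(\<Sum>a\<in>UNIV. \<Sum>s\<in>UNIV. cnj (mps_state A xi T (a, s, ms)) * mps_state B xi T (a, s, ms))
      = mtrace (mm (mm (adj (A ms)) (B ms)) rho)" if "length ms = T" for ms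
  proof -
    have "(\<Sum>a\<in>UNIV. \<Sum>s\<in>UNIV. cnj (mps_state A xi T (a, s, ms)) * mps_state B xi T (a, s, ms))
        = mtrace (mm (adj (mm (A ms) Xi)) (mm (B ms) Xi))"
      using that by (simp add: mps_state_def mtrace_def mmult_def adj_def Xi_def)
    also have "\<dots> = mtrace (mm (mm (adj (A ms)) (mm (B ms) Xi)) (adj Xi))"
      by (subst mtrace_mm_commute) (simp add: adj_mmult mmult_assoc)
    also have "\<dots> = mtrace (mm (mm (adj (A ms)) (B ms)) rho)"
      by (simp add: mmult_assoc rho)
    finally show ?thesis .
  qed
  have "inner_c (carrierT T) (mps_state A xi T) (mps_state B xi T)
      = (\<Sum>ms\<in>{ms. length ms = T}. \<Sum>a\<in>UNIV. \<Sum>s\<in>UNIV. cnj (mps_state A xi T (a, s, ms)) * mps_state B xi T (a, s, ms))"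
    unfolding inner_c_def sum_carrierT
    by (subst sum.swap, rule sum.cong, simp, subst sum.swap, simp)
  also have "\<dots> = mtrace (mm (msum {ms. length ms = T} (\<lambda>ms. mm (adj (A ms)) (B ms))) rho)"
    using finite_lists_length_eq[of "UNIV :: 'm set" T] by (simp add: per_word mtrace_msum_left)
  finally show ?thesis .
qed

lemma msum_lists_length_Suc:
  "msum {ys. length ys = Suc n} f = msum UNIV (\<lambda>y. msum {ys. length ys = n} (\<lambda>ys. f (y # ys)))"
  for f :: "'m::finite list \<Rightarrow> 'i \<Rightarrow> 'j \<Rightarrow> complex"
  by (auto simp: msum_def sum_lists_length_Suc intro!: ext)

lemma msum_sandwich: "finite S \<Longrightarrow> msum S (\<lambda>k. mmult I (mmult I A (f k)) B) = mmult I (mmult I A (msum S f)) B"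
  by (simp add: mmult_msum_left mmult_msum_right)

locale gauged_channel =
  fixes W D :: "'m::finite \<Rightarrow> 'd::finite \<Rightarrow> 'd \<Rightarrow> complex" and rho :: "'d \<Rightarrow> 'd \<Rightarrow> complex"
  assumes kraus: "msum UNIV (\<lambda>m. mm (adj (W m)) (W m)) = mone"
    and gauge: "msum UNIV (\<lambda>m. mm (adj (W m)) (D m)) = (\<lambda>i j. 0)"
    and fixed_point: "msum UNIV (\<lambda>m. mm (mm (W m) rho) (adj (W m))) = rho"
begin

definition gram :: "nat \<Rightarrow> 'd \<Rightarrow> 'd \<Rightarrow> complex" where
  "gram n = msum {ms. length ms = n} (\<lambda>ms. mm (adj (wprod W ms)) (wprod W ms))"

definition cross_gram :: "nat \<Rightarrow> 'd \<Rightarrow> 'd \<Rightarrow> complex" where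
  "cross_gram n = msum {ms. length ms = n} (\<lambda>ms. mm (adj (wprod W ms)) (dwprod W D ms))"

definition deriv_gram :: "nat \<Rightarrow> 'd \<Rightarrow> 'd \<Rightarrow> complex" where
  "deriv_gram n = msum {ms. length ms = n} (\<lambda>ms. mm (adj (dwprod W D ms)) (dwprod W D ms))"

definition alpha :: complex where
  "alpha = (\<Sum>m\<in>UNIV. mtrace (mm (mm (D m) rho) (adj (D m))))"

lemma finite_words: "finite {ms :: 'm list. length ms = n}"
  using finite_lists_length_eq[of "UNIV :: 'm set" n] by simp

lemma gram_eq_mone: "gram n = mone"
proof (induction n)
  case 0
  then show ?case by (simp add: gram_def msum_def)
next
  case (Suc n)
  have "gram (Suc n) = msum UNIV (\<lambda>m. mm (mm (adj (W m)) (gram n)) (W m))"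
    unfolding gram_def msum_lists_length_Suc
    by (simp add: adj_mmult mmult_assoc msum_sandwich[OF finite_words, symmetric])
  then show ?case
    using Suc kraus by simp
qed

lemma cross_gram_eq_zero: "cross_gram n = (\<lambda>i j. 0)"
proof (induction n)
  case 0
  then show ?case by (simp add: cross_gram_def msum_def)
next
  case (Suc n)
  have "cross_gram (Suc n)
      = msum UNIV (\<lambda>m. madd (mm (mm (adj (W m)) (cross_gram n)) (W m)) (mm (mm (adj (W m)) (gram n)) (D m)))"
    unfolding gram_def cross_gram_def msum_lists_length_Suc
    by (simp add: adj_mmult mmult_assoc mmult_madd_right msum_madd msum_sandwich[OF finite_words, symmetric])
  then show ?case
    using Suc gauge by (simp add: gram_eq_mone)
qed

lemma adj_cross_gram_eq_zero:
  "msum {ms. length ms = n} (\<lambda>ms. mm (adj (dwprod W D ms)) (wprod W ms)) = (\<lambda>i j. 0)"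
  using arg_cong[OF cross_gram_eq_zero, of adj] by (simp add: cross_gram_def adj_msum adj_mmult)

lemma deriv_gram_Suc:
  "deriv_gram (Suc n)
    = madd (msum UNIV (\<lambda>m. mm (mm (adj (W m)) (deriv_gram n)) (W m))) (msum UNIV (\<lambda>m. mm (adj (D m)) (D m)))"
proof -
  have "deriv_gram (Suc n) = msum UNIV (\<lambda>m. madd
      (madd (mm (mm (adj (W m)) (deriv_gram n)) (W m)) (mm (mm (adj (D m)) (cross_gram n)) (W m)))
      (madd (mm (mm (adj (W m)) (adj (cross_gram n))) (D m)) (mm (mm (adj (D m)) (gram n)) (D m))))"
    unfolding gram_def cross_gram_def deriv_gram_def msum_lists_length_Suc adj_msum
    by (simp add: adj_mmult adj_madd mmult_assoc mmult_madd_left mmult_madd_right msum_madd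
        msum_sandwich[OF finite_words, symmetric])
  then show ?thesis
    by (simp add: gram_eq_mone cross_gram_eq_zero msum_madd)
qed

lemma mtrace_deriv_gram: "mtrace (mm (deriv_gram n) rho) = of_nat n * alpha"
proof (induction n)
  case 0
  then show ?case by (simp add: deriv_gram_def msum_def mtrace_def mmult_def)
next
  case (Suc n)
  have "mtrace (mm (msum UNIV (\<lambda>m. mm (mm (adj (W m)) (deriv_gram n)) (W m))) rho)
      = mtrace (mm (deriv_gram n) (msum UNIV (\<lambda>m. mm (mm (W m) rho) (adj (W m)))))"
    by (simp add: mtrace_msum_left mtrace_msum_right mtrace_mm_rotate)
  moreover have "mtrace (mm (msum UNIV (\<lambda>m. mm (adj (D m)) (D m))) rho) = alpha"
    unfolding alpha_def mtrace_msum_left[OF finite_class.finite_UNIV]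
    by (intro sum.cong refl) (metis mmult_assoc finite_class.finite_UNIV mtrace_mm_commute)
  ultimately show ?case
    using Suc by (simp add: deriv_gram_Suc mtrace_madd_left fixed_point algebra_simps)
qed

lemma inner_c_mps_state_dwprod_wprod:
  assumes "\<And>s s'. rho s s' = (\<Sum>a\<in>UNIV. xi (a, s) * cnj (xi (a, s')))"
  shows "inner_c (carrierT T) (mps_state (dwprod W D) xi T) (mps_state (wprod W) xi T) = 0"
  using adj_cross_gram_eq_zero by (simp add: inner_c_mps_state[OF assms] mtrace_def)

lemma inner_c_mps_state_dwprod_dwprod:
  assumes "\<And>s s'. rho s s' = (\<Sum>a\<in>UNIV. xi (a, s) * cnj (xi (a, s')))"
  shows "inner_c (carrierT T) (mps_state (dwprod W D) xi T) (mps_state (dwprod W D) xi T) = of_nat T * alpha"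
  using mtrace_deriv_gram by (simp add: inner_c_mps_state[OF assms] deriv_gram_def)

end

lemma gauged_channel_Wop:
  fixes K :: "real \<Rightarrow> 'm::finite \<Rightarrow> 'd::finite \<Rightarrow> 'd \<Rightarrow> complex"
  assumes herm: "\<And>a b. h a b = cnj (h b a)"
    and kraus: "msum UNIV (\<lambda>m. mm (adj (K t m)) (K t m)) = mone"
    and gauge: "msum UNIV (\<lambda>m. mm (adj (Wop K h t m)) (mderiv (\<lambda>t. Wop K h t m) t)) = (\<lambda>i j. 0)"
    and fixed: "msum UNIV (\<lambda>m. mm (mm (K t m) rho) (adj (K t m))) = rho"
  shows "gauged_channel (Wop K h t) (\<lambda>m. mderiv (\<lambda>t. Wop K h t m) t) rho"
proof
  define E where "E = mexp UNIV (\<lambda>a b. - \<i> * of_real t * h a b)"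
  have unitary: "mm (adj E) E = mone"
    unfolding E_def by (intro ext mexp_unitary herm) simp_all
  have W: "Wop K h t = kraus_mix E (K t)"
    unfolding E_def by (rule Wop_eq_kraus_mix)
  show "msum UNIV (\<lambda>m. mm (adj (Wop K h t m)) (Wop K h t m)) = mone"
    unfolding W kraus_mix_unitary_kraus[OF unitary] by (rule kraus)
  show "msum UNIV (\<lambda>m. mm (mm (Wop K h t m) rho) (adj (Wop K h t m))) = rho"
    unfolding W kraus_mix_unitary_channel[OF unitary] by (rule fixed)
qed (rule gauge)

subsection \<open>Quantum Fisher information under a unitary gauge\<close>

lemma Htot_hermitian:
  assumes "\<And>a b. h a b = cnj (h b a)"
  shows "Htot h T x y = cnj (Htot h T y x)"
proof -
  have "hsite h tau x y = cnj (hsite h tau y x)" for tau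
    by (cases x, cases y) (auto simp: hsite_def intro: assms)
  then show ?thesis
    by (simp add: Htot_def)
qed

lemma inner_c_i_add_self:
  "inner_c I (\<lambda>y. \<i> * p y + q y) (\<lambda>y. \<i> * p y + q y)
    = inner_c I p p + inner_c I q q + \<i> * inner_c I q p - \<i> * inner_c I p q"
proof -
  have "inner_c I (\<lambda>y. \<i> * p y + q y) (\<lambda>y. \<i> * p y + q y)
      = (\<Sum>y\<in>I. cnj (p y) * p y + cnj (q y) * q y + \<i> * (cnj (q y) * p y) - \<i> * (cnj (p y) * q y))"
    unfolding inner_c_def by (intro sum.cong refl) (simp add: algebra_simps)
  then show ?thesis
    unfolding inner_c_def by (simp add: sum.distrib sum_subtractf sum_distrib_left)
qed

lemma inner_c_i_add_left: "inner_c I (\<lambda>y. \<i> * p y + q y) r = - \<i> * inner_c I p r + inner_c I q r"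
proof -
  have "inner_c I (\<lambda>y. \<i> * p y + q y) r = (\<Sum>y\<in>I. - \<i> * (cnj (p y) * r y) + cnj (q y) * r y)"
    unfolding inner_c_def by (intro sum.cong refl) (simp add: algebra_simps)
  then show ?thesis
    unfolding inner_c_def by (simp only: sum.distrib sum_distrib_left)
qed

lemma mexp_gauge_has_vector_derivative:
  assumes fin: "finite C"
    and gauge: "\<And>t x. x \<in> C \<Longrightarrow> psiV t x = mvec C (mexp C (\<lambda>x y. \<i> * of_real t * H x y)) (psiW t) x"
    and deriv: "\<And>x. x \<in> C \<Longrightarrow> ((\<lambda>t. psiW t x) has_vector_derivative dpsi x) (at t0)"
    and x: "x \<in> C"
  shows "((\<lambda>t. psiV t x) has_vector_derivative
           mvec C (mexp C (\<lambda>x y. \<i> * of_real t0 * H x y)) (\<lambda>y. \<i> * mvec C H (psiW t0) y + dpsi y) x) (at t0)"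
proof -
  define U where "U = mexp C (\<lambda>x y. \<i> * of_real t0 * H x y)"
  have psiV: "(\<lambda>t. psiV t x) = (\<lambda>t. \<Sum>y\<in>C. mexp C (\<lambda>x y. \<i> * of_real t * H x y) x y * psiW t y)"
    by (intro ext) (simp add: gauge[OF x] mvec_def)
  have "((\<lambda>t. \<Sum>y\<in>C. mexp C (\<lambda>x y. \<i> * of_real t * H x y) x y * psiW t y) has_vector_derivative
      (\<Sum>y\<in>C. U x y * dpsi y + \<i> * mmult C U H x y * psiW t0 y)) (at t0)"
    unfolding U_def
    by (intro has_vector_derivative_sum has_vector_derivative_mult mexp_has_vector_derivative fin deriv)
  moreover have "mvec C U (\<lambda>y. \<i> * mvec C H (psiW t0) y + dpsi y) x
      = (\<Sum>y\<in>C. U x y * dpsi y + \<i> * mmult C U H x y * psiW t0 y)"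
  proof -
    have "mvec C U (\<lambda>y. \<i> * mvec C H (psiW t0) y + dpsi y) x
        = \<i> * mvec C U (mvec C H (psiW t0)) x + mvec C U dpsi x"
      unfolding mvec_def by (simp add: sum.distrib sum_distrib_left algebra_simps)
    also have "mvec C U (mvec C H (psiW t0)) x = mvec C (mmult C U H) (psiW t0) x"
      using fin by (simp add: mvec_mvec)
    finally show ?thesis
      by (simp add: mvec_def sum.distrib sum_distrib_left mult_ac)
  qed
  ultimately show ?thesis
    unfolding psiV U_def[symmetric] by simp
qed

lemma QFI_mexp_gauge:
  fixes H :: "'i \<Rightarrow> 'i \<Rightarrow> complex" and psiV psiW :: "real \<Rightarrow> 'i \<Rightarrow> complex"
  assumes fin: "finite C" and herm: "\<And>x y. H x y = cnj (H y x)"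
    and gauge: "\<And>t x. x \<in> C \<Longrightarrow> psiV t x = mvec C (mexp C (\<lambda>x y. \<i> * of_real t * H x y)) (psiW t) x"
    and deriv: "\<And>x. x \<in> C \<Longrightarrow> ((\<lambda>t. psiW t x) has_vector_derivative dpsi x) (at t0)"
    and orth: "inner_c C dpsi (psiW t0) = 0"
  shows "complex_of_real (QFI C psiV t0)
    = 4 * (inner_c C (psiW t0) (mvec C (mmult C H H) (psiW t0)) - (inner_c C (psiW t0) (mvec C H (psiW t0)))\<^sup>2)
      + 4 * inner_c C dpsi dpsi + 8 * complex_of_real (Im (inner_c C (psiW t0) (mvec C H dpsi)))"
proof -
  define psi where "psi = psiW t0"
  define U where "U = mexp C (\<lambda>x y. \<i> * of_real t0 * H x y)"
  define w where "w = (\<lambda>y. \<i> * mvec C H psi y + dpsi y)"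
  have unitary: "mmult C (adj U) U x y = mone x y" if "x \<in> C" "y \<in> C" for x y
    unfolding U_def using fin herm _ that by (rule mexp_unitary) simp
  have "adj H = H"
    by (simp add: adj_def flip: herm)
  then have H_sym: "inner_c C (mvec C H u) v = inner_c C u (mvec C H v)" for u v
    using inner_c_mvec_left[OF fin, of H u v] by simp
  have "inner_c C (vderiv psiV t0) (vderiv psiV t0) = inner_c C (mvec C U w) (mvec C U w)"
    and "inner_c C (vderiv psiV t0) (psiV t0) = inner_c C (mvec C U w) (mvec C U psi)"
    using mexp_gauge_has_vector_derivative[OF fin gauge deriv] gauge
    by (auto intro!: inner_c_cong simp: vderiv_def vector_derivative_at U_def w_def psi_def)
  then have QFI: "QFI C psiV t0 = 4 * (Re (inner_c C w w) - (cmod (inner_c C w psi))\<^sup>2)"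
    unfolding QFI_def by (simp add: inner_c_unitary[OF fin unitary])
  define z where "z = inner_c C psi (mvec C H dpsi)"
  define e where "e = inner_c C psi (mvec C H psi)"
  have square: "inner_c C (mvec C H psi) (mvec C H psi) = inner_c C psi (mvec C (mmult C H H) psi)"
    by (simp add: H_sym mvec_mvec[OF fin])
  moreover have "inner_c C dpsi (mvec C H psi) = cnj z" and "inner_c C (mvec C H psi) dpsi = z"
    by (simp_all only: z_def cnj_inner_c H_sym)
  ultimately have "inner_c C w w = inner_c C psi (mvec C (mmult C H H) psi) + inner_c C dpsi dpsi + 2 * Im z"
    unfolding w_def inner_c_i_add_self by (simp add: complex_eq_iff)
  moreover have "cnj e = e"
    by (simp only: e_def cnj_inner_c H_sym)
  then have "Im e = 0"
    by (simp add: complex_eq_iff)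
  moreover have "inner_c C w psi = - \<i> * e"
    unfolding w_def inner_c_i_add_left e_def using orth by (simp add: H_sym psi_def)
  then have "(cmod (inner_c C w psi))\<^sup>2 = (Re e)\<^sup>2"
    using \<open>Im e = 0\<close> by (simp add: norm_mult cmod_power2)
  moreover have "Im (inner_c C psi (mvec C (mmult C H H) psi)) = 0"
    using Im_inner_c_self[of C "mvec C H psi"] by (simp only: square)
  ultimately show ?thesis
    unfolding QFI z_def e_def psi_def
    by (simp add: complex_eq_iff norm_mult cmod_power2 power2_eq_square algebra_simps)
qed

theorem lemma3:
  fixes K :: "real \<Rightarrow> 'm::finite \<Rightarrow> 'd::finite \<Rightarrow> 'd \<Rightarrow> complex"
    and h :: "'m \<Rightarrow> 'm \<Rightarrow> complex"
    and rho :: "'d \<Rightarrow> 'd \<Rightarrow> complex"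
    and xi :: "'d \<times> 'd \<Rightarrow> complex"
    and th0 :: real and T :: nat
  assumes diff: "\<And>t m i j. (\<lambda>s. K s m i j) differentiable (at t)"
    and kraus: "\<And>t. (\<lambda>i j. \<Sum>m\<in>UNIV. mmult UNIV (adj (K t m)) (K t m) i j) = mone"
    and HKS: "\<exists>c :: 'm \<Rightarrow> 'm \<Rightarrow> complex. \<forall>a b.
               \<i> * (\<Sum>m\<in>UNIV. mmult UNIV (adj (K th0 m)) (mderiv (\<lambda>t. K t m) th0) a b)
             = (\<Sum>i\<in>UNIV. \<Sum>j\<in>UNIV. c i j * mmult UNIV (adj (K th0 i)) (K th0 j) a b)"
    and herm: "\<And>a b. h a b = cnj (h b a)"
    and Wgauge: "(\<lambda>a b. \<Sum>m\<in>UNIV. mmult UNIV (adj (Wop K h th0 m))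
                                     (mderiv (\<lambda>t. Wop K h t m) th0) a b) = (\<lambda>a b. 0)"
    and fixed: "(\<lambda>a b. \<Sum>m\<in>UNIV. mmult UNIV (mmult UNIV (K th0 m) rho) (adj (K th0 m)) a b) = rho"
    and purif: "\<And>s s'. rho s s' = (\<Sum>a\<in>UNIV. xi (a, s) * cnj (xi (a, s')))"
    and trace1: "mtrace rho = 1"
  shows "(\<forall>th. \<forall>x\<in>carrierT T.
            PhiT K xi T th x
          = mvec (carrierT T) (mexp (carrierT T) (\<lambda>x y. \<i> * of_real th * Htot h T x y))
                 (PhiT (Wop K h) xi T th) x)
      \<and> complex_of_real (QFI (carrierT T) (PhiT K xi T) th0)
          = 4 * (inner_c (carrierT T) (PhiT (Wop K h) xi T th0)
                   (mvec (carrierT T) (mmult (carrierT T) (Htot h T) (Htot h T)) (PhiT (Wop K h) xi T th0))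
                 - (inner_c (carrierT T) (PhiT (Wop K h) xi T th0)
                   (mvec (carrierT T) (Htot h T) (PhiT (Wop K h) xi T th0)))\<^sup>2)
            + 4 * of_nat T * (\<Sum>m\<in>UNIV. mtrace (mmult UNIV (mmult UNIV (mderiv (\<lambda>t. Wop K h t m) th0) rho)
                                                   (adj (mderiv (\<lambda>t. Wop K h t m) th0))))
            + 8 * complex_of_real (Im (inner_c (carrierT T) (PhiT (Wop K h) xi T th0)
                   (mvec (carrierT T) (Htot h T) (vderiv (PhiT (Wop K h) xi T) th0))))"
proof -
  let ?D = "\<lambda>m. mderiv (\<lambda>t. Wop K h t m) th0"
  interpret gauged_channel "Wop K h th0" ?D rho
    by (rule gauged_channel_Wop[OF herm]) (use kraus Wgauge fixed in \<open>simp_all add: msum_def\<close>)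
  have dPhi: "((\<lambda>t. PhiT (Wop K h) xi T t x) has_vector_derivative mps_state (dwprod (Wop K h th0) ?D) xi T x)
      (at th0)" for x
    unfolding PhiT_eq_mps_state
    by (intro mps_state_has_vector_derivative wprod_has_vector_derivative Wop_has_vector_derivative diff)
  then have "vderiv (PhiT (Wop K h) xi T) th0 = mps_state (dwprod (Wop K h th0) ?D) xi T"
    by (auto simp: vderiv_def vector_derivative_at)
  moreover have "\<forall>th. \<forall>x\<in>carrierT T. PhiT K xi T th x
      = mvec (carrierT T) (mexp (carrierT T) (\<lambda>x y. \<i> * of_real th * Htot h T x y)) (PhiT (Wop K h) xi T th) x"
    using PhiT_eq_mexp_Htot_PhiT_Wop by blast
  moreover note QFI_mexp_gauge[OF finite_carrierT Htot_hermitian[OF herm] PhiT_eq_mexp_Htot_PhiT_Wop dPhi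
      inner_c_mps_state_dwprod_wprod[OF purif, folded PhiT_eq_mps_state]]
  ultimately show ?thesis
    by (simp add: inner_c_mps_state_dwprod_dwprod[OF purif] alpha_def)
qed

end
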